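(* Let $\mathbf{v}\in\mathbb{R}^n$ with $\|\mathbf{v}\|_1:=\sum_{k=1}^n|v_k|<1$ and let $s:=\sum_{k=1}^n v_k$. Then \[ 0\le\prod_{k=1}^n\frac{1}{1+v_k}-(1-s)\le\frac{\|\mathbf{v}\|_1^2}{1-\|\mathbf{v}\|_1} \] and \[ -\frac{\|\mathbf{v}\|_1^2}{(1-\|\mathbf{v}\|_1)^3}\Bigl(1+\tfrac14\|\mathbf{v}\|_1^2\Bigr)\le\prod_{k=1}^n(1+v_k)-(1+s)\le\frac{s^2}{1-s}. \] *)

theory Defs
  imports "HOL-Analysis.Analysis"
begin

end

theory Submission
  imports Defs
begin

text \<open>
  The one-sided bounds come from \<open>1 + x \<le> exp x\<close>: it gives
  \<open>\<Prod>\<^sub>k 1/(1 + v\<^sub>k) \<ge> exp (-s) \<ge> 1 - s\<close> and \<open>\<Prod>\<^sub>k (1 + v\<^sub>k) \<le> exp s \<le> 1/(1 - s)\<close>.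
  The two-sided bounds come from majorisation. Expanding each factor as a power series in \<open>v\<^sub>k\<close>,
  the coefficients are dominated in absolute value by those of the series in \<open>|v\<^sub>k|\<close>, so the error
  of the linearisation is at most the error of the majorant product: \<open>\<Prod>\<^sub>k (1 + |v\<^sub>k|) - 1 - N\<close>
  resp. \<open>\<Prod>\<^sub>k 1/(1 - |v\<^sub>k|) - 1 - N\<close>. Since \<open>\<Prod>\<^sub>k (1 + |v\<^sub>k|) \<le> exp N\<close> and, by Weierstrass'
  product inequality, \<open>\<Prod>\<^sub>k (1 - |v\<^sub>k|) \<ge> 1 - N\<close>, both majorant errors are at most
  \<open>1/(1 - N) - 1 - N = N\<^sup>2/(1 - N)\<close>.
\<close>

lemma one_div_one_minus_eq:
  fixes x :: real
  assumes "x \<noteq> 1"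
  shows "1 / (1 - x) = 1 + x + x\<^sup>2 / (1 - x)"
  using assms by (simp add: field_simps power2_eq_square)

lemma exp_le_one_div_one_minus:
  fixes x :: real
  assumes "x < 1"
  shows "exp x \<le> 1 / (1 - x)"
proof -
  have "1 - x \<le> exp (- x)"
    using exp_ge_add_one_self[of "- x"] by simp
  then show ?thesis
    using assms by (simp add: exp_minus field_simps)
qed

lemma prod_one_plus_le_exp_sum:
  fixes f :: "'a \<Rightarrow> real"
  assumes "\<And>k. k \<in> A \<Longrightarrow> 0 \<le> 1 + f k"
  shows "(\<Prod>k\<in>A. 1 + f k) \<le> exp (sum f A)"
proof (cases "finite A")
  case True
  have "(\<Prod>k\<in>A. 1 + f k) \<le> (\<Prod>k\<in>A. exp (f k))"
    using assms by (intro prod_mono) (auto intro: exp_ge_add_one_self)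
  then show ?thesis
    using True by (simp add: exp_sum)
qed simp

lemma prod_one_plus_minus_linear_le:
  fixes f :: "'a \<Rightarrow> real"
  assumes "\<And>k. k \<in> A \<Longrightarrow> 0 \<le> 1 + f k" and "sum f A < 1"
  shows "(\<Prod>k\<in>A. 1 + f k) - (1 + sum f A) \<le> (sum f A)\<^sup>2 / (1 - sum f A)"
proof -
  have "(\<Prod>k\<in>A. 1 + f k) \<le> exp (sum f A)"
    using assms(1) by (rule prod_one_plus_le_exp_sum)
  also have "\<dots> \<le> 1 / (1 - sum f A)"
    using assms(2) by (rule exp_le_one_div_one_minus)
  also have "\<dots> = 1 + sum f A + (sum f A)\<^sup>2 / (1 - sum f A)"
    using assms(2) by (intro one_div_one_minus_eq) simp
  finally show ?thesis
    by simp
qed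

lemma one_minus_sum_le_prod_inverse:
  fixes f :: "'a \<Rightarrow> real"
  assumes "\<And>k. k \<in> A \<Longrightarrow> 0 < 1 + f k"
  shows "1 - sum f A \<le> (\<Prod>k\<in>A. 1 / (1 + f k))"
proof (cases "finite A")
  case True
  have "exp (- f k) \<le> 1 / (1 + f k)" if "k \<in> A" for k
    using exp_ge_add_one_self[of "f k"] assms[OF that] by (simp add: exp_minus field_simps)
  then have "(\<Prod>k\<in>A. exp (- f k)) \<le> (\<Prod>k\<in>A. 1 / (1 + f k))"
    by (intro prod_mono) auto
  moreover have "1 - sum f A \<le> (\<Prod>k\<in>A. exp (- f k))"
    using exp_ge_add_one_self[of "- sum f A"] True by (simp add: exp_sum[symmetric] sum_negf)
  ultimately show ?thesis
    by linarith
qed simp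

lemma norm_prod_minus_linear_le:
  fixes x f :: "'a \<Rightarrow> 'b :: real_normed_field"
  assumes "\<And>k. k \<in> A \<Longrightarrow> norm (f k) \<le> g k"
      and "\<And>k. k \<in> A \<Longrightarrow> norm (x k - (1 + f k)) \<le> y k - (1 + g k)"
  shows "norm ((\<Prod>k\<in>A. x k) - (1 + sum f A)) \<le> (\<Prod>k\<in>A. y k) - (1 + sum g A)"
  using assms
proof (induction A rule: infinite_finite_induct)
  case (insert j A)
  define P where "P = (\<Prod>k\<in>A. x k)"
  define s where "s = sum f A"
  define Q where "Q = (\<Prod>k\<in>A. y k)"
  define S where "S = sum g A"
  have IH: "norm (P - (1 + s)) \<le> Q - (1 + S)"
    using insert unfolding P_def s_def Q_def S_def by auto
  have f: "norm (f j) \<le> g j" and x: "norm (x j - (1 + f j)) \<le> y j - (1 + g j)"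
    using insert.prems by auto
  have sS: "norm s \<le> S"
    unfolding s_def S_def using insert.prems by (intro order.trans[OF norm_sum sum_mono]) auto
  have one_s: "norm (1 + s) \<le> 1 + S"
    using norm_triangle_ineq[of 1 s] sS by simp
  have g: "0 \<le> g j" and y: "1 + g j \<le> y j"
    using f x norm_ge_zero[of "f j"] norm_ge_zero[of "x j - (1 + f j)"] by linarith+
  have xy: "norm (x j) \<le> y j"
    using norm_triangle_ineq[of "x j - (1 + f j)" "1 + f j"] norm_triangle_ineq[of 1 "f j"] f x
    by simp
  have "x j * P - (1 + (f j + s))
          = (x j - (1 + f j)) * (1 + s) + f j * s + x j * (P - (1 + s))"
    by (simp add: algebra_simps)
  then have "norm (x j * P - (1 + (f j + s)))
          \<le> (y j - (1 + g j)) * (1 + S) + g j * S + y j * (Q - (1 + S))"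
    using IH one_s sS f x xy g y
    by (auto simp: norm_mult intro!: order.trans[OF norm_triangle_ineq] add_mono mult_mono)
  also have "\<dots> = y j * Q - (1 + (g j + S))"
    by (simp add: algebra_simps)
  finally show ?case
    using insert.hyps unfolding P_def s_def Q_def S_def by simp
qed simp_all

lemma abs_prod_one_plus_minus_linear_le:
  fixes f :: "'a \<Rightarrow> real" and A :: "'a set"
  defines "N \<equiv> (\<Sum>k\<in>A. \<bar>f k\<bar>)"
  assumes "N < 1"
  shows "\<bar>(\<Prod>k\<in>A. 1 + f k) - (1 + sum f A)\<bar> \<le> N\<^sup>2 / (1 - N)"
proof -
  have "\<bar>(\<Prod>k\<in>A. 1 + f k) - (1 + sum f A)\<bar> \<le> (\<Prod>k\<in>A. 1 + \<bar>f k\<bar>) - (1 + N)"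
    using norm_prod_minus_linear_le[of A f "\<lambda>k. \<bar>f k\<bar>" "\<lambda>k. 1 + f k" "\<lambda>k. 1 + \<bar>f k\<bar>"]
    unfolding N_def by simp
  also have "\<dots> \<le> exp N - (1 + N)"
    using prod_le_exp_sum[of A "\<lambda>k. \<bar>f k\<bar>"] unfolding N_def by simp
  also have "\<dots> \<le> N\<^sup>2 / (1 - N)"
    using exp_le_one_div_one_minus[OF \<open>N < 1\<close>] one_div_one_minus_eq[of N] \<open>N < 1\<close> by simp
  finally show ?thesis .
qed

lemma prod_one_div_one_minus_le:
  fixes a :: "'a \<Rightarrow> real"
  assumes "finite A" "\<And>k. k \<in> A \<Longrightarrow> 0 \<le> a k" "sum a A < 1"
  shows "(\<Prod>k\<in>A. 1 / (1 - a k)) \<le> 1 / (1 - sum a A)"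
proof -
  have "a k \<le> 1" if "k \<in> A" for k
    using member_le_sum[of k A a] assms that by fastforce
  then have "1 - sum a A \<le> (\<Prod>k\<in>A. 1 - a k)"
    using assms by (intro Weierstrass_prod_ineq) auto
  then show ?thesis
    using assms by (simp add: prod_dividef divide_left_mono)
qed

lemma abs_prod_inverse_minus_linear_le:
  fixes f :: "'a \<Rightarrow> real" and A :: "'a set"
  defines "N \<equiv> (\<Sum>k\<in>A. \<bar>f k\<bar>)"
  assumes "finite A" "N < 1"
  shows "\<bar>(\<Prod>k\<in>A. 1 / (1 + f k)) - (1 - sum f A)\<bar> \<le> N\<^sup>2 / (1 - N)"
proof -
  have factor: "\<bar>1 / (1 + f k) - (1 - f k)\<bar> \<le> 1 / (1 - \<bar>f k\<bar>) - (1 + \<bar>f k\<bar>)"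
    if "k \<in> A" for k
  proof -
    have lt: "\<bar>f k\<bar> < 1"
      using member_le_sum[of k A "\<lambda>k. \<bar>f k\<bar>"] that assms unfolding N_def by simp
    then have "\<bar>1 / (1 + f k) - (1 - f k)\<bar> = \<bar>f k\<bar>\<^sup>2 / (1 + f k)"
      by (simp add: field_simps power2_eq_square abs_mult)
    also have "\<dots> \<le> \<bar>f k\<bar>\<^sup>2 / (1 - \<bar>f k\<bar>)"
      using lt by (intro divide_left_mono) auto
    also have "\<dots> = 1 / (1 - \<bar>f k\<bar>) - (1 + \<bar>f k\<bar>)"
      using one_div_one_minus_eq[of "\<bar>f k\<bar>"] lt by simp
    finally show ?thesis .
  qed
  have "\<bar>(\<Prod>k\<in>A. 1 / (1 + f k)) - (1 - sum f A)\<bar> \<le> (\<Prod>k\<in>A. 1 / (1 - \<bar>f k\<bar>)) - (1 + N)"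
    using norm_prod_minus_linear_le[of A "\<lambda>k. - f k" "\<lambda>k. \<bar>f k\<bar>"
        "\<lambda>k. 1 / (1 + f k)" "\<lambda>k. 1 / (1 - \<bar>f k\<bar>)"] factor
    unfolding N_def by (simp add: sum_negf)
  also have "\<dots> \<le> 1 / (1 - N) - (1 + N)"
    using prod_one_div_one_minus_le[of A "\<lambda>k. \<bar>f k\<bar>"] assms unfolding N_def by simp
  also have "\<dots> = N\<^sup>2 / (1 - N)"
    using one_div_one_minus_eq[of N] \<open>N < 1\<close> by simp
  finally show ?thesis .
qed

lemma power2_div_one_minus_le_div_cube:
  fixes x :: real
  assumes "0 \<le> x" "x < 1"
  shows "x\<^sup>2 / (1 - x) \<le> x\<^sup>2 / (1 - x) ^ 3 * (1 + x\<^sup>2 / 4)"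
proof -
  have "(1 - x) ^ 3 \<le> (1 - x) ^ 1"
    using assms by (intro power_decreasing) auto
  then have "x\<^sup>2 / (1 - x) \<le> x\<^sup>2 / (1 - x) ^ 3"
    using assms by (intro divide_left_mono) auto
  also have "\<dots> \<le> x\<^sup>2 / (1 - x) ^ 3 * (1 + x\<^sup>2 / 4)"
    using mult_left_mono[of 1 "1 + x\<^sup>2 / 4" "x\<^sup>2 / (1 - x) ^ 3"] assms by simp
  finally show ?thesis .
qed

theorem lemma7:
  fixes v :: "real ^ 'n"
  defines "N \<equiv> (\<Sum>k\<in>UNIV. \<bar>v $ k\<bar>)"
      and "s \<equiv> (\<Sum>k\<in>UNIV. v $ k)"
  assumes "N < 1"
  shows "0 \<le> (\<Prod>k\<in>UNIV. 1 / (1 + v $ k)) - (1 - s)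
         \<and> (\<Prod>k\<in>UNIV. 1 / (1 + v $ k)) - (1 - s) \<le> N\<^sup>2 / (1 - N)
         \<and> - (N\<^sup>2 / (1 - N) ^ 3) * (1 + N\<^sup>2 / 4) \<le> (\<Prod>k\<in>UNIV. 1 + v $ k) - (1 + s)
         \<and> (\<Prod>k\<in>UNIV. 1 + v $ k) - (1 + s) \<le> s\<^sup>2 / (1 - s)"
proof -
  have N0: "0 \<le> N" and sN: "\<bar>s\<bar> \<le> N"
    unfolding N_def s_def by (auto intro: sum_nonneg sum_abs)
  have s1: "s < 1"
    using \<open>N < 1\<close> sN by simp
  have pos: "0 < 1 + v $ k" for k
    using member_le_sum[of k UNIV "\<lambda>k. \<bar>v $ k\<bar>"] \<open>N < 1\<close> unfolding N_def by simp
  have "1 - s \<le> (\<Prod>k\<in>UNIV. 1 / (1 + v $ k))"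
    unfolding s_def using pos by (rule one_minus_sum_le_prod_inverse)
  moreover have "\<bar>(\<Prod>k\<in>UNIV. 1 / (1 + v $ k)) - (1 - s)\<bar> \<le> N\<^sup>2 / (1 - N)"
    using abs_prod_inverse_minus_linear_le[of UNIV "\<lambda>k. v $ k"] \<open>N < 1\<close>
    unfolding N_def s_def by simp
  moreover have "\<bar>(\<Prod>k\<in>UNIV. 1 + v $ k) - (1 + s)\<bar> \<le> N\<^sup>2 / (1 - N)"
    using abs_prod_one_plus_minus_linear_le[of "\<lambda>k. v $ k" UNIV] \<open>N < 1\<close>
    unfolding N_def s_def by simp
  moreover have "(\<Prod>k\<in>UNIV. 1 + v $ k) - (1 + s) \<le> s\<^sup>2 / (1 - s)"
    unfolding s_def using pos s1[unfolded s_def]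
    by (intro prod_one_plus_minus_linear_le less_imp_le) auto
  ultimately show ?thesis
    using power2_div_one_minus_le_div_cube[OF N0 \<open>N < 1\<close>]
    unfolding abs_le_iff mult_minus_left
    by (intro conjI; linarith)
qed

end
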